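(* Let $\xi=(\xi(x))_{x\in\mathbb{Z}}$ be i.i.d. random variables with values in $(-\infty,0]$ such that $\langle\log(-\xi(0)\vee1)\rangle=\infty$. Then for all $b\ge1$, \[ \lim_{n\to\infty}\frac{1}{G^{-1}(1/n)}\sum_{x=1}^{\lfloor 2n\log n\rfloor}\log\Bigl(\frac{-\xi(x)\vee b}{b}\Bigr)=\infty\qquad\text{Prob-almost surely.} \]
   Context: Prob and $\langle\cdot\rangle$ denote the law and expectation of $\xi$. $G(\ell)=-\log\langle(-\xi(0)\vee1)^{-1/\ell}\rangle$ for $\ell>0$; $G$ is positive, continuous, strictly decreasing with $G(\ell)\to0$ as $\ell\to\infty$, and $G^{-1}$ denotes its inverse function (defined at $1/n$ for all sufficiently large $n$). *)

theory Defs
  imports "HOL-Probability.Probability"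
begin

definition Gfun :: "'a measure \<Rightarrow> ('a \<Rightarrow> real) \<Rightarrow> real \<Rightarrow> real" where
  "Gfun M X l = - ln (\<integral>w. (max (- X w) 1) powr (- 1 / l) \<partial>M)"

definition Ginv :: "'a measure \<Rightarrow> ('a \<Rightarrow> real) \<Rightarrow> real \<Rightarrow> real" where
  "Ginv M X y = (THE l. 0 < l \<and> Gfun M X l = y)"

end

theory Submission
  imports Defs
begin

(* Let L = ln (-xi(0) max 1), phi l = <exp (- L / l)> = exp (- G l) and Z x = ln ((-xi(x) max b) / b),
   so that L - ln b <= Z 0 <= L.  Since <L> = infinity, l (1 - phi l) tends to infinity, hence
   l_n = G^-1(1/n), i.e. phi l_n = exp (- 1/n), eventually exceeds every multiple of n.
   By independence and Markov's inequality for exp (- S / l_n), the sum S of the Z x over the block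
   1..floor(2 n ln n) satisfies P(S <= K l_n) <= e^K psi(l_n)^(2 n ln n - 1), where
   psi l = <exp (- Z 0 / l)> <= phi l + ln b / l <= 1 - (7/10)/n once l_n >= (5 ln b + 1) n.
   This is O(n^(-7/5)), summable, so by Borel-Cantelli S > K l_n eventually for every K, a.s. *)

lemma one_minus_exp_neg_ge:
  fixes x :: real
  assumes "0 \<le> x"
  shows "x / (1 + x) \<le> 1 - exp (- x)"
proof -
  have "exp (- x) \<le> 1 / (1 + x)"
    using exp_ge_add_one_self[of x] assms by (simp add: exp_minus field_simps)
  then show ?thesis
    using assms by (simp add: field_simps)
qed

lemma exp_neg_le_exp_neg_add_diff:
  fixes a d :: real
  assumes "0 \<le> a" "0 \<le> d"
  shows "exp (- a) \<le> exp (- (a + d)) + d"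
proof -
  have "exp (- a) * (1 - exp (- d)) \<le> 1 * d"
    using assms exp_ge_add_one_self[of "- d"] by (intro mult_mono) auto
  moreover have "exp (- a) = exp (- (a + d)) + exp (- a) * (1 - exp (- d))"
    by (simp add: algebra_simps flip: exp_add)
  ultimately show ?thesis
    by simp
qed

lemma min_half_le_scaled_one_minus_exp:
  fixes y c l :: real
  assumes "0 \<le> y" "0 \<le> c" "c \<le> l"
  shows "min y c / 2 \<le> l * (1 - exp (- y / l))"
proof (cases "l = 0")
  case True
  with assms show ?thesis by simp
next
  case False
  define m where "m = min y c"
  have m: "0 \<le> m" "m \<le> y" "m \<le> l" and l: "0 < l"
    using assms False unfolding m_def by auto
  have "m / 2 \<le> m * l / (l + m)"
    using m l by (simp add: field_simps) (metis mult_left_mono mult.commute)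
  also have "\<dots> = l * ((m / l) / (1 + m / l))"
    using l m by (simp add: field_simps)
  also have "\<dots> \<le> l * (1 - exp (- (m / l)))"
    using l m by (intro mult_left_mono one_minus_exp_neg_ge) auto
  also have "\<dots> \<le> l * (1 - exp (- y / l))"
    using l m by (intro mult_left_mono) (auto simp: divide_right_mono)
  finally show ?thesis
    unfolding m_def .
qed

lemma ln_max_div_bounds:
  fixes y b :: real
  assumes "1 \<le> b"
  shows "0 \<le> ln (max y b / b)"
    and "ln (max y b / b) \<le> ln (max y 1)"
    and "ln (max y 1) \<le> ln (max y b / b) + ln b"
proof -
  have b: "0 < b" using assms by simp
  show "0 \<le> ln (max y b / b)"
    using b by simp
  have "max y b / b \<le> max y 1"
    using assms b by (cases "y \<ge> b") (auto simp: divide_le_eq)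
  then show "ln (max y b / b) \<le> ln (max y 1)"
    using b by simp
  have "ln (max y 1) \<le> ln (max y b)"
    using assms by simp
  then show "ln (max y 1) \<le> ln (max y b / b) + ln b"
    using b by (simp add: ln_div)
qed

lemma exp_neg_inverse_add_le:
  fixes n c l :: real
  assumes n: "10 \<le> n" and c: "0 \<le> c" and l: "(5 * c + 1) * n \<le> l"
  shows "exp (- 1 / n) + c / l \<le> 1 - (7 / 10) / n"
proof -
  have "exp (- 1 / n) \<le> 1 / (1 + 1 / n)"
    using n exp_ge_add_one_self[of "1 / n"] by (simp add: exp_minus field_simps)
  also have "\<dots> \<le> 1 - (9 / 10) / n"
    using n by (simp add: field_simps)
  finally have exp_le: "exp (- 1 / n) \<le> 1 - (9 / 10) / n" .
  have "0 < (5 * c + 1) * n"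
    using c n by simp
  then have "c / l \<le> c / ((5 * c + 1) * n)"
    using c l by (intro divide_left_mono) auto
  also have "\<dots> = (c / (5 * c + 1)) / n"
    by simp
  also have "\<dots> \<le> (1 / 5) / n"
    using c n by (intro divide_right_mono) (simp_all add: field_simps)
  finally show ?thesis
    using exp_le by (simp add: field_simps)
qed

lemma real_nat_floor_gt_minus_1: "x - 1 < real (nat \<lfloor>x\<rfloor>)"
  using real_of_int_floor_gt_diff_one[of x] by (cases "0 \<le> \<lfloor>x\<rfloor>") auto

lemma power_le_exp_mult_powr:
  fixes n q :: real and k :: nat
  assumes n: "10 \<le> n" and q: "0 \<le> q" "q \<le> 1 - (7 / 10) / n"
    and k: "2 * n * ln n - 1 \<le> real k"
  shows "q ^ k \<le> exp 1 * n powr (- 7 / 5)"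
proof -
  have "q ^ k \<le> exp (- (7 / 10) / n) ^ k"
    using q exp_ge_add_one_self[of "- (7 / 10) / n"] by (intro power_mono) auto
  also have "\<dots> = exp (real k * (- (7 / 10) / n))"
    by (rule exp_of_nat_mult[symmetric])
  also have "\<dots> \<le> exp ((2 * n * ln n - 1) * (- (7 / 10) / n))"
    using k n by (intro exp_mono mult_right_mono_neg) auto
  also have "(2 * n * ln n - 1) * (- (7 / 10) / n) = - (7 / 5) * ln n + (7 / 10) / n"
    using n by (simp add: field_simps)
  also have "exp (- (7 / 5) * ln n + (7 / 10) / n) \<le> exp (1 + - (7 / 5) * ln n)"
    using n by (intro exp_mono) (simp add: field_simps)
  also have "\<dots> = exp 1 * n powr (- 7 / 5)"
    using n by (simp only: exp_add) (simp add: powr_def)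
  finally show ?thesis .
qed

lemma exp_neg_inverse_tendsto_1: "(\<lambda>n::nat. exp (- 1 / real n)) \<longlonglongrightarrow> 1"
proof -
  have "(\<lambda>n::nat. exp (- 1 / real n)) \<longlonglongrightarrow> exp 0"
    by (intro tendsto_exp tendsto_divide_0[OF tendsto_const]
        filterlim_at_top_imp_at_infinity[OF filterlim_real_sequentially])
  then show ?thesis
    by simp
qed

definition neg_exp_moment :: "'a measure \<Rightarrow> ('a \<Rightarrow> real) \<Rightarrow> real \<Rightarrow> real" where
  "neg_exp_moment M Y l = (\<integral>w. exp (- Y w / l) \<partial>M)"

context prob_space
begin

lemma nn_integral_infinite_imp_truncated_integral_gt:
  assumes [measurable]: "Y \<in> borel_measurable M"
    and nonneg: "\<And>w. w \<in> space M \<Longrightarrow> 0 \<le> Y w"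
    and infinite: "(\<integral>\<^sup>+ w. ennreal (Y w) \<partial>M) = \<infinity>"
  obtains n :: nat where "A < (\<integral>w. min (Y w) (real n) \<partial>M)"
proof -
  define f where "f n w = ennreal (min (Y w) (real n))" for n w
  have "(\<lambda>n. integral\<^sup>N M (f n)) \<longlonglongrightarrow> (\<integral>\<^sup>+ w. ennreal (Y w) \<partial>M)"
  proof (rule nn_integral_LIMSEQ)
    show "incseq f"
      unfolding f_def incseq_def le_fun_def by (auto intro!: ennreal_leI)
    show "(\<lambda>n. f n w) \<longlonglongrightarrow> ennreal (Y w)" for w
    proof (rule tendsto_eventually)
      show "\<forall>\<^sub>F n in sequentially. f n w = ennreal (Y w)"
        using eventually_ge_at_top[of "nat \<lceil>Y w\<rceil>"]
      proof eventually_elim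
        fix n
        assume "nat \<lceil>Y w\<rceil> \<le> n"
        then have "Y w \<le> real n"
          by (meson order_trans real_nat_ceiling_ge of_nat_le_iff)
        then show "f n w = ennreal (Y w)"
          by (simp add: f_def)
      qed
    qed
    show "f n \<in> borel_measurable M" for n
      unfolding f_def by measurable
  qed
  with infinite obtain n where n: "ennreal (max A 0) < integral\<^sup>N M (f n)"
    using order_tendstoD(1)[of _ \<infinity> sequentially "ennreal (max A 0)"]
    by (auto simp: eventually_sequentially)
  have "integrable M (\<lambda>w. min (Y w) (real n))"
    by (rule integrable_const_bound[where B = "real n"]) (auto simp: nonneg)
  then have "integral\<^sup>N M (f n) = ennreal (\<integral>w. min (Y w) (real n) \<partial>M)"
    unfolding f_def by (intro nn_integral_eq_integral) (auto simp: nonneg)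
  with n have "ennreal (max A 0) < ennreal (\<integral>w. min (Y w) (real n) \<partial>M)"
    by simp
  then have "max A 0 < (\<integral>w. min (Y w) (real n) \<partial>M)"
    by (subst (asm) ennreal_less_iff) auto
  then show ?thesis
    using that[of n] by simp
qed

context
  fixes Y :: "'a \<Rightarrow> real"
  assumes Y_measurable [measurable]: "Y \<in> borel_measurable M"
    and Y_nonneg: "\<And>w. w \<in> space M \<Longrightarrow> 0 \<le> Y w"
begin

lemma integrable_exp_neg_div:
  "0 < l \<Longrightarrow> integrable M (\<lambda>w. exp (- Y w / l))"
  by (rule integrable_const_bound[where B = 1]) (auto simp: Y_nonneg divide_nonneg_pos)

lemma neg_exp_moment_pos: "0 < l \<Longrightarrow> 0 < neg_exp_moment M Y l"
  unfolding neg_exp_moment_def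
  using integral_less_AE_space[of "\<lambda>_. 0" "\<lambda>w. exp (- Y w / l)"] integrable_exp_neg_div
  by (simp add: emeasure_space_1)

lemma neg_exp_moment_le_1: "0 < l \<Longrightarrow> neg_exp_moment M Y l \<le> 1"
  unfolding neg_exp_moment_def
  by (intro integral_le_const integrable_exp_neg_div) (auto simp: Y_nonneg divide_nonneg_pos)

lemma neg_exp_moment_strict_mono:
  assumes nonzero: "\<not> (AE w in M. Y w = 0)" and "0 < l1" "l1 < l2"
  shows "neg_exp_moment M Y l1 < neg_exp_moment M Y l2"
proof -
  define D where "D w = exp (- Y w / l2) - exp (- Y w / l1)" for w
  have D_nonneg: "0 \<le> D w" if "w \<in> space M" for w
    using assms Y_nonneg[OF that] by (simp add: D_def frac_le divide_left_mono)
  have D_integrable: "integrable M D"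
    unfolding D_def using assms by (intro Bochner_Integration.integrable_diff integrable_exp_neg_div) auto
  have "\<not> (AE w in M. D w = 0)"
  proof
    assume "AE w in M. D w = 0"
    then have "AE w in M. Y w = 0"
    proof eventually_elim
      fix w
      assume "D w = 0"
      then have "Y w * l1 = Y w * l2"
        using assms by (simp add: D_def field_simps)
      then show "Y w = 0"
        using assms by simp
    qed
    with nonzero show False ..
  qed
  then have "(\<integral>w. D w \<partial>M) \<noteq> 0"
    using D_integrable D_nonneg by (subst integral_nonneg_eq_0_iff_AE) auto
  moreover have "0 \<le> (\<integral>w. D w \<partial>M)"
    using D_nonneg by (rule Bochner_Integration.integral_nonneg)
  moreover have "(\<integral>w. D w \<partial>M) = neg_exp_moment M Y l2 - neg_exp_moment M Y l1"
    unfolding D_def neg_exp_moment_def using assms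
    by (intro Bochner_Integration.integral_diff integrable_exp_neg_div) auto
  ultimately show ?thesis
    by linarith
qed

lemma continuous_on_neg_exp_moment: "continuous_on {0<..} (neg_exp_moment M Y)"
  unfolding continuous_on_def
proof
  fix l :: real
  assume l: "l \<in> {0<..}"
  show "(neg_exp_moment M Y \<longlongrightarrow> neg_exp_moment M Y l) (at l within {0<..})"
    unfolding tendsto_at_iff_sequentially comp_def neg_exp_moment_def
  proof (intro allI impI)
    fix s :: "nat \<Rightarrow> real"
    assume s: "\<forall>i. s i \<in> {0<..} - {l}" and lim: "s \<longlonglongrightarrow> l"
    show "(\<lambda>i. \<integral>w. exp (- Y w / s i) \<partial>M) \<longlonglongrightarrow> (\<integral>w. exp (- Y w / l) \<partial>M)"
    proof (rule integral_dominated_convergence[where w = "\<lambda>_. 1"])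
      show "AE w in M. (\<lambda>i. exp (- Y w / s i)) \<longlonglongrightarrow> exp (- Y w / l)"
        using l lim by (auto intro!: tendsto_intros)
      show "AE w in M. norm (exp (- Y w / s i)) \<le> 1" for i
        using s Y_nonneg by (auto simp: divide_nonneg_pos)
    qed auto
  qed
qed

lemma neg_exp_moment_tendsto_1: "(\<lambda>m::nat. neg_exp_moment M Y (real m)) \<longlonglongrightarrow> 1"
proof -
  have "(\<lambda>m::nat. \<integral>w. exp (- Y w / real m) \<partial>M) \<longlonglongrightarrow> (\<integral>w. 1 \<partial>M)"
  proof (rule integral_dominated_convergence[where w = "\<lambda>_. 1"])
    have "(\<lambda>m::nat. exp (- Y w / real m)) \<longlonglongrightarrow> exp 0" for w
      by (intro tendsto_exp tendsto_divide_0[OF tendsto_const]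
          filterlim_at_top_imp_at_infinity[OF filterlim_real_sequentially])
    then show "AE w in M. (\<lambda>m::nat. exp (- Y w / real m)) \<longlonglongrightarrow> 1"
      by simp
    show "AE w in M. norm (exp (- Y w / real m)) \<le> 1" for m
      using Y_nonneg by (auto simp: divide_nonneg_nonneg)
  qed auto
  then show ?thesis
    by (simp add: neg_exp_moment_def prob_space)
qed

lemma filterlim_scaled_one_minus_neg_exp_moment:
  assumes infinite: "(\<integral>\<^sup>+ w. ennreal (Y w) \<partial>M) = \<infinity>"
  shows "filterlim (\<lambda>l. l * (1 - neg_exp_moment M Y l)) at_top at_top"
  unfolding filterlim_at_top
proof
  fix A :: real
  obtain n :: nat where n: "2 * A < (\<integral>w. min (Y w) (real n) \<partial>M)"
    using nn_integral_infinite_imp_truncated_integral_gt[OF Y_measurable Y_nonneg infinite] .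
  show "\<forall>\<^sub>F l in at_top. A \<le> l * (1 - neg_exp_moment M Y l)"
    using eventually_ge_at_top[of "real n + 1"]
  proof eventually_elim
    fix l :: real
    assume "real n + 1 \<le> l"
    then have l: "real n \<le> l" "0 < l"
      by linarith+
    have "integrable M (\<lambda>w. min (Y w) (real n) / 2)"
      by (rule integrable_const_bound[where B = "real n"]) (auto simp: Y_nonneg)
    then have "(\<integral>w. min (Y w) (real n) / 2 \<partial>M) \<le> (\<integral>w. l * (1 - exp (- Y w / l)) \<partial>M)"
      using l Y_nonneg integrable_exp_neg_div[OF l(2)]
      by (intro integral_mono min_half_le_scaled_one_minus_exp) auto
    also have "\<dots> = l * (1 - neg_exp_moment M Y l)"
      unfolding neg_exp_moment_def using integrable_exp_neg_div[OF l(2)]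
      by (simp add: prob_space right_diff_distrib)
    finally show "A \<le> l * (1 - neg_exp_moment M Y l)"
      using n by simp
  qed
qed

end

lemma neg_exp_moment_le_add:
  assumes [measurable]: "Y \<in> borel_measurable M" "Y' \<in> borel_measurable M"
    and "\<And>w. w \<in> space M \<Longrightarrow> 0 \<le> Y w"
    and "\<And>w. w \<in> space M \<Longrightarrow> Y w \<le> Y' w"
    and "\<And>w. w \<in> space M \<Longrightarrow> Y' w \<le> Y w + c"
    and l: "0 < l"
  shows "neg_exp_moment M Y l \<le> neg_exp_moment M Y' l + c / l"
proof -
  have "exp (- Y w / l) \<le> exp (- Y' w / l) + c / l" if "w \<in> space M" for w
  proof -
    have "exp (- (Y w / l)) \<le> exp (- (Y w / l + (Y' w - Y w) / l)) + (Y' w - Y w) / l"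
      using assms that by (intro exp_neg_le_exp_neg_add_diff) auto
    also have "Y w / l + (Y' w - Y w) / l = Y' w / l"
      by (simp add: diff_divide_distrib)
    also have "(Y' w - Y w) / l \<le> c / l"
      using assms that by (intro divide_right_mono) (auto simp: algebra_simps)
    finally show ?thesis
      by simp
  qed
  moreover have "integrable M (\<lambda>w. exp (- Y w / l))" "integrable M (\<lambda>w. exp (- Y' w / l))"
    using l assms(3) order_trans[OF assms(3,4)]
    by (auto intro!: integrable_const_bound[where B = 1] simp: divide_nonneg_pos)
  ultimately have "neg_exp_moment M Y l \<le> (\<integral>w. exp (- Y' w / l) + c / l \<partial>M)"
    unfolding neg_exp_moment_def by (intro integral_mono) auto
  also have "\<dots> = neg_exp_moment M Y' l + c / l"
    unfolding neg_exp_moment_def using \<open>integrable M (\<lambda>w. exp (- Y' w / l))\<close>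
    by (simp add: prob_space)
  finally show ?thesis .
qed

lemma prob_sum_le_Chernoff:
  fixes Z :: "'i \<Rightarrow> 'a \<Rightarrow> real"
  assumes I: "finite I" and indep: "indep_vars (\<lambda>_. borel) Z I"
    and nonneg: "\<And>i w. i \<in> I \<Longrightarrow> w \<in> space M \<Longrightarrow> 0 \<le> Z i w"
    and l: "0 < l"
  shows "prob {w \<in> space M. (\<Sum>i\<in>I. Z i w) \<le> K * l}
    \<le> exp K * (\<Prod>i\<in>I. neg_exp_moment M (Z i) l)"
proof -
  have integrable: "integrable M (\<lambda>w. exp (- Z i w / l))" if "i \<in> I" for i
    using indep nonneg that l unfolding indep_vars_def
    by (intro integrable_exp_neg_div) auto
  have indep_exp: "indep_vars (\<lambda>_. borel) (\<lambda>i w. exp (- Z i w / l)) I"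
    by (rule indep_vars_compose2[OF indep]) measurable
  have prod_eq: "exp (- (\<Sum>i\<in>I. Z i w) / l) = (\<Prod>i\<in>I. exp (- Z i w / l))" for w
  proof -
    have "- (\<Sum>i\<in>I. Z i w) / l = (\<Sum>i\<in>I. - Z i w / l)"
      by (simp add: sum_divide_distrib sum_negf)
    then show ?thesis
      using I by (simp add: exp_sum)
  qed
  have "{w \<in> space M. (\<Sum>i\<in>I. Z i w) \<le> K * l}
      = {w \<in> space M. exp (- K) \<le> exp (- (\<Sum>i\<in>I. Z i w) / l)}"
    using l by (auto simp: field_simps)
  also have "prob \<dots> \<le> (\<integral>w. exp (- (\<Sum>i\<in>I. Z i w) / l) \<partial>M) / exp (- K)"
    unfolding prod_eq
    by (intro integral_Markov_inequality_measure indep_vars_integrable I indep_exp integrable)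
      (auto intro!: prod_nonneg)
  also have "(\<integral>w. exp (- (\<Sum>i\<in>I. Z i w) / l) \<partial>M) = (\<Prod>i\<in>I. neg_exp_moment M (Z i) l)"
    unfolding prod_eq neg_exp_moment_def
    by (intro indep_vars_lebesgue_integral I indep_exp integrable)
  finally show ?thesis
    by (simp add: exp_minus field_simps)
qed

lemma AE_filterlim_at_top_divide_if_summable_prob:
  fixes S :: "nat \<Rightarrow> 'a \<Rightarrow> real" and g :: "nat \<Rightarrow> real"
  assumes [measurable]: "\<And>n. S n \<in> borel_measurable M"
    and g_pos: "\<forall>\<^sub>F n in sequentially. 0 < g n"
    and summable: "\<And>K::nat. summable (\<lambda>n. prob {w \<in> space M. S n w \<le> real K * g n})"
  shows "AE w in M. filterlim (\<lambda>n. S n w / g n) at_top sequentially"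
proof -
  have "AE w in M. \<forall>\<^sub>F n in sequentially. real K * g n < S n w" for K :: nat
  proof -
    have "AE w in M. \<forall>\<^sub>F n in sequentially. w \<in> space M - {w \<in> space M. S n w \<le> real K * g n}"
      using summable by (intro borel_cantelli_AE1) (auto simp: less_top[symmetric])
    then show ?thesis
      by (auto elim!: eventually_mono)
  qed
  then have "AE w in M. \<forall>K::nat. \<forall>\<^sub>F n in sequentially. real K * g n < S n w"
    by (simp add: AE_all_countable)
  then show ?thesis
  proof eventually_elim
    fix w
    assume w: "\<forall>K::nat. \<forall>\<^sub>F n in sequentially. real K * g n < S n w"
    show "filterlim (\<lambda>n. S n w / g n) at_top sequentially"
      unfolding filterlim_at_top
    proof
      fix A :: real
      show "\<forall>\<^sub>F n in sequentially. A \<le> S n w / g n"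
        using w[rule_format, of "nat \<lceil>A\<rceil>"] g_pos
      proof eventually_elim
        fix n
        assume "real (nat \<lceil>A\<rceil>) * g n < S n w" and "0 < g n"
        then have "real (nat \<lceil>A\<rceil>) \<le> S n w / g n"
          by (simp add: field_simps)
        then show "A \<le> S n w / g n"
          by linarith
      qed
    qed
  qed
qed

end

locale infinite_log_moment = prob_space M for M :: "'a measure" +
  fixes X :: "'a \<Rightarrow> real"
  assumes X_measurable [measurable]: "X \<in> borel_measurable M"
    and log_moment_infinite: "(\<integral>\<^sup>+ w. ennreal (ln (max (- X w) 1)) \<partial>M) = \<infinity>"
begin

definition log_mag :: "'a \<Rightarrow> real" where
  "log_mag w = ln (max (- X w) 1)"

lemma log_mag_measurable [measurable]: "log_mag \<in> borel_measurable M"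
  unfolding log_mag_def by measurable

lemma log_mag_nonneg: "0 \<le> log_mag w"
  unfolding log_mag_def by simp

lemma log_mag_not_AE_zero: "\<not> (AE w in M. log_mag w = 0)"
proof
  assume "AE w in M. log_mag w = 0"
  then have "(\<integral>\<^sup>+ w. ennreal (log_mag w) \<partial>M) = (\<integral>\<^sup>+ w. 0 \<partial>M)"
    by (intro nn_integral_cong_AE) auto
  then show False
    using log_moment_infinite unfolding log_mag_def by simp
qed

lemma Gfun_eq: "Gfun M X l = - ln (neg_exp_moment M log_mag l)"
proof -
  have "max (- X w) 1 powr (- 1 / l) = exp (- log_mag w / l)" for w
    by (simp add: powr_def log_mag_def)
  then show ?thesis
    unfolding Gfun_def neg_exp_moment_def by simp
qed

lemmas neg_exp_moment_log_mag_pos = neg_exp_moment_pos[OF log_mag_measurable log_mag_nonneg]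
  and neg_exp_moment_log_mag_le_1 = neg_exp_moment_le_1[OF log_mag_measurable log_mag_nonneg]
  and neg_exp_moment_log_mag_tendsto_1 =
    neg_exp_moment_tendsto_1[OF log_mag_measurable log_mag_nonneg]
  and continuous_on_neg_exp_moment_log_mag =
    continuous_on_neg_exp_moment[OF log_mag_measurable log_mag_nonneg]
  and neg_exp_moment_log_mag_strict_mono =
    neg_exp_moment_strict_mono[OF log_mag_measurable log_mag_nonneg log_mag_not_AE_zero]

lemma neg_exp_moment_log_mag_lt_1: "0 < l \<Longrightarrow> neg_exp_moment M log_mag l < 1"
  using neg_exp_moment_log_mag_strict_mono[of l "l + 1"]
    neg_exp_moment_log_mag_le_1[of "l + 1"]
  by simp

lemma Ginv_eqI:
  assumes "0 < l" and "neg_exp_moment M log_mag l = exp (- y)"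
  shows "Ginv M X y = l"
  unfolding Ginv_def
proof (rule the_equality)
  show "0 < l \<and> Gfun M X l = y"
    using assms by (simp add: Gfun_eq)
  fix l'
  assume l': "0 < l' \<and> Gfun M X l' = y"
  then have "ln (neg_exp_moment M log_mag l') = - y"
    by (simp add: Gfun_eq)
  then have "neg_exp_moment M log_mag l' = neg_exp_moment M log_mag l"
    using assms neg_exp_moment_log_mag_pos[of l'] l' by (metis exp_ln)
  then show "l' = l"
    using assms l' neg_exp_moment_log_mag_strict_mono[of l l'] neg_exp_moment_log_mag_strict_mono[of l' l]
    by (cases l l' rule: linorder_cases) auto
qed

lemma eventually_Ginv_inverse:
  "\<forall>\<^sub>F n in sequentially. 0 < Ginv M X (1 / real n)
     \<and> neg_exp_moment M log_mag (Ginv M X (1 / real n)) = exp (- 1 / real n)"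
  using order_tendstoD(1)[OF exp_neg_inverse_tendsto_1 neg_exp_moment_log_mag_lt_1[OF zero_less_one]]
    eventually_gt_at_top[of 0]
proof eventually_elim
  fix n :: nat
  assume n: "neg_exp_moment M log_mag 1 < exp (- 1 / real n)" and "0 < n"
  obtain m :: nat where m: "exp (- 1 / real n) < neg_exp_moment M log_mag (real m)" "1 \<le> m"
    using eventually_conj[OF order_tendstoD(1)[OF neg_exp_moment_log_mag_tendsto_1, of "exp (- 1 / real n)"]
        eventually_ge_at_top[of 1]]
    using \<open>0 < n\<close> by (auto simp: eventually_sequentially)
  have "continuous_on {1..real m} (neg_exp_moment M log_mag)"
    by (rule continuous_on_subset[OF continuous_on_neg_exp_moment_log_mag]) auto
  then obtain l where "1 \<le> l" "neg_exp_moment M log_mag l = exp (- 1 / real n)"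
    using IVT'[of "neg_exp_moment M log_mag" 1 "exp (- 1 / real n)" "real m"] n m by fastforce
  moreover from this have "Ginv M X (1 / real n) = l"
    by (intro Ginv_eqI) simp_all
  ultimately show "0 < Ginv M X (1 / real n)
     \<and> neg_exp_moment M log_mag (Ginv M X (1 / real n)) = exp (- 1 / real n)"
    by simp
qed

lemma eventually_Ginv_ge: "\<forall>\<^sub>F n in sequentially. A * real n \<le> Ginv M X (1 / real n)"
proof -
  obtain T where T: "1 \<le> T" "\<And>l. T \<le> l \<Longrightarrow> max A 0 \<le> l * (1 - neg_exp_moment M log_mag l)"
    using filterlim_scaled_one_minus_neg_exp_moment[OF log_mag_measurable log_mag_nonneg]
      log_moment_infinite
    unfolding filterlim_at_top eventually_at_top_linorder log_mag_def
    by (metis max.cobounded1 max.cobounded2 order_trans)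
  have "0 < T"
    using T(1) by simp
  show ?thesis
    using order_tendstoD(1)[OF exp_neg_inverse_tendsto_1 neg_exp_moment_log_mag_lt_1[OF \<open>0 < T\<close>]]
      eventually_Ginv_inverse eventually_gt_at_top[of 0]
  proof eventually_elim
    fix n :: nat
    define l where "l = Ginv M X (1 / real n)"
    assume "neg_exp_moment M log_mag T < exp (- 1 / real n)" and "0 < n"
      and "0 < Ginv M X (1 / real n)
        \<and> neg_exp_moment M log_mag (Ginv M X (1 / real n)) = exp (- 1 / real n)"
    then have n: "0 < n" and l: "0 < l" "neg_exp_moment M log_mag l = exp (- 1 / real n)"
      and "neg_exp_moment M log_mag T < neg_exp_moment M log_mag l"
      unfolding l_def by auto
    then have "T \<le> l"
      using neg_exp_moment_log_mag_strict_mono[of l T] by fastforce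
    then have "max A 0 \<le> l * (1 - exp (- 1 / real n))"
      using T(2) l(2) by metis
    also have "\<dots> \<le> l * (1 / real n)"
      using l exp_ge_add_one_self[of "- 1 / real n"] by (intro mult_left_mono) auto
    finally show "A * real n \<le> l"
      using n by (simp add: field_simps)
  qed
qed

end

locale log_excess_iid = infinite_log_moment M "\<xi> 0"
  for M :: "'a measure" and \<xi> :: "int \<Rightarrow> 'a \<Rightarrow> real" +
  fixes b :: real
  assumes \<xi>_measurable [measurable]: "\<And>x. \<xi> x \<in> borel_measurable M"
    and \<xi>_indep: "indep_vars (\<lambda>_. borel) \<xi> UNIV"
    and \<xi>_ident: "\<And>x. distr M borel (\<xi> x) = distr M borel (\<xi> 0)"
    and b_ge_1: "1 \<le> b"
begin

definition log_excess :: "int \<Rightarrow> 'a \<Rightarrow> real" where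
  "log_excess x w = ln (max (- \<xi> x w) b / b)"

definition block_length :: "nat \<Rightarrow> int" where
  "block_length n = \<lfloor>2 * real n * ln (real n)\<rfloor>"

definition log_excess_sum :: "nat \<Rightarrow> 'a \<Rightarrow> real" where
  "log_excess_sum n w = (\<Sum>x\<in>{1..block_length n}. log_excess x w)"

lemma log_excess_measurable [measurable]: "log_excess x \<in> borel_measurable M"
  unfolding log_excess_def by measurable

lemma log_excess_sum_measurable [measurable]: "log_excess_sum n \<in> borel_measurable M"
  unfolding log_excess_sum_def by measurable

lemma log_excess_nonneg: "0 \<le> log_excess x w"
  unfolding log_excess_def using ln_max_div_bounds(1)[OF b_ge_1] .

lemma indep_log_excess: "indep_vars (\<lambda>_. borel) log_excess UNIV"
  unfolding log_excess_def by (rule indep_vars_compose2[OF \<xi>_indep]) measurable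

lemma neg_exp_moment_log_excess:
  "neg_exp_moment M (log_excess x) l = neg_exp_moment M (log_excess 0) l"
proof -
  define h where "h v = exp (- ln (max (- v) b / b) / l)" for v :: real
  have h_measurable: "h \<in> borel_measurable borel"
    unfolding h_def by measurable
  have distr_eq: "neg_exp_moment M (log_excess y) l = integral\<^sup>L (distr M borel (\<xi> y)) h" for y
    unfolding integral_distr[OF \<xi>_measurable h_measurable]
    by (simp add: neg_exp_moment_def log_excess_def h_def)
  show ?thesis
    by (simp only: distr_eq \<xi>_ident[of x])
qed

lemma neg_exp_moment_log_excess_le:
  assumes "0 < l"
  shows "neg_exp_moment M (log_excess 0) l \<le> neg_exp_moment M log_mag l + ln b / l"
proof (rule neg_exp_moment_le_add[OF log_excess_measurable log_mag_measurable _ _ _ assms])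
  fix w
  show "0 \<le> log_excess 0 w"
    by (rule log_excess_nonneg)
  show "log_excess 0 w \<le> log_mag w"
    unfolding log_excess_def log_mag_def by (rule ln_max_div_bounds(2)[OF b_ge_1])
  show "log_mag w \<le> log_excess 0 w + ln b"
    unfolding log_excess_def log_mag_def by (rule ln_max_div_bounds(3)[OF b_ge_1])
qed

lemma prob_log_excess_sum_le:
  assumes "0 < l"
  shows "prob {w \<in> space M. log_excess_sum n w \<le> K * l}
    \<le> exp K * neg_exp_moment M (log_excess 0) l ^ nat (block_length n)"
proof -
  have "prob {w \<in> space M. log_excess_sum n w \<le> K * l}
      \<le> exp K * (\<Prod>x\<in>{1..block_length n}. neg_exp_moment M (log_excess x) l)"
    unfolding log_excess_sum_def
    by (intro prob_sum_le_Chernoff indep_vars_subset[OF indep_log_excess] assms)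
      (simp_all add: log_excess_nonneg)
  also have "(\<Prod>x\<in>{1..block_length n}. neg_exp_moment M (log_excess x) l)
      = (\<Prod>x\<in>{1..block_length n}. neg_exp_moment M (log_excess 0) l)"
    by (rule prod.cong[OF refl neg_exp_moment_log_excess])
  also have "\<dots> = neg_exp_moment M (log_excess 0) l ^ nat (block_length n)"
    by simp
  finally show ?thesis .
qed

lemma eventually_prob_log_excess_sum_le:
  "\<forall>\<^sub>F n in sequentially. prob {w \<in> space M. log_excess_sum n w \<le> K * Ginv M (\<xi> 0) (1 / real n)}
     \<le> exp K * exp 1 * real n powr (- 7 / 5)"
  using eventually_Ginv_inverse eventually_Ginv_ge[of "5 * ln b + 1"] eventually_ge_at_top[of 10]
proof eventually_elim
  fix n :: nat
  define l where "l = Ginv M (\<xi> 0) (1 / real n)"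
  assume "0 < Ginv M (\<xi> 0) (1 / real n)
      \<and> neg_exp_moment M log_mag (Ginv M (\<xi> 0) (1 / real n)) = exp (- 1 / real n)"
    and "(5 * ln b + 1) * real n \<le> Ginv M (\<xi> 0) (1 / real n)" and "10 \<le> n"
  then have l: "0 < l" "neg_exp_moment M log_mag l = exp (- 1 / real n)"
    and l_ge: "(5 * ln b + 1) * real n \<le> l" and n: "10 \<le> real n"
    unfolding l_def by auto
  have "neg_exp_moment M (log_excess 0) l \<le> exp (- 1 / real n) + ln b / l"
    using neg_exp_moment_log_excess_le[OF l(1)] l(2) by simp
  also have "\<dots> \<le> 1 - (7 / 10) / real n"
    using n b_ge_1 l_ge by (intro exp_neg_inverse_add_le) auto
  finally have psi_power: "neg_exp_moment M (log_excess 0) l ^ nat (block_length n)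
      \<le> exp 1 * real n powr (- 7 / 5)"
    using n less_imp_le[OF neg_exp_moment_pos[OF log_excess_measurable log_excess_nonneg l(1)]]
      real_nat_floor_gt_minus_1[of "2 * real n * ln (real n)"]
    unfolding block_length_def by (intro power_le_exp_mult_powr) simp_all
  have "prob {w \<in> space M. log_excess_sum n w \<le> K * l}
      \<le> exp K * neg_exp_moment M (log_excess 0) l ^ nat (block_length n)"
    by (rule prob_log_excess_sum_le[OF l(1)])
  also have "\<dots> \<le> exp K * (exp 1 * real n powr (- 7 / 5))"
    using psi_power by (rule mult_left_mono) simp
  finally show "prob {w \<in> space M. log_excess_sum n w \<le> K * l}
      \<le> exp K * exp 1 * real n powr (- 7 / 5)"
    by (simp add: mult.assoc)
qed

lemma AE_log_excess_sum_diverges: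
  "AE w in M. filterlim (\<lambda>n. log_excess_sum n w / Ginv M (\<xi> 0) (1 / real n)) at_top sequentially"
proof (rule AE_filterlim_at_top_divide_if_summable_prob)
  show "\<forall>\<^sub>F n in sequentially. 0 < Ginv M (\<xi> 0) (1 / real n)"
    using eventually_Ginv_inverse by eventually_elim simp
  fix K :: nat
  have "\<forall>\<^sub>F n in sequentially.
      norm (prob {w \<in> space M. log_excess_sum n w \<le> real K * Ginv M (\<xi> 0) (1 / real n)})
        \<le> exp (real K) * exp 1 * real n powr (- 7 / 5)"
    using eventually_prob_log_excess_sum_le[of "real K"] by eventually_elim simp
  moreover have "summable (\<lambda>n::nat. exp (real K) * exp 1 * real n powr (- 7 / 5))"
    by (rule summable_mult) (simp add: summable_real_powr_iff)
  ultimately show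
    "summable (\<lambda>n. prob {w \<in> space M. log_excess_sum n w \<le> real K * Ginv M (\<xi> 0) (1 / real n)})"
    by (rule summable_comparison_test_ev)
qed (rule log_excess_sum_measurable)

end

theorem lemma3p3:
  fixes M :: "'a measure" and \<xi> :: "int \<Rightarrow> 'a \<Rightarrow> real" and b :: real
  assumes "prob_space M"
    and meas: "\<And>x. \<xi> x \<in> borel_measurable M"
    and indep: "prob_space.indep_vars M (\<lambda>_. borel) \<xi> UNIV"
    and ident: "\<And>x. distr M borel (\<xi> x) = distr M borel (\<xi> 0)"
    and nonpos: "\<And>x w. w \<in> space M \<Longrightarrow> \<xi> x w \<le> 0"
    and logmom: "(\<integral>\<^sup>+ w. ennreal (ln (max (- \<xi> 0 w) 1)) \<partial>M) = \<infinity>"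
    and b: "b \<ge> 1"
  shows "AE w in M. filterlim
           (\<lambda>n::nat. (\<Sum>x\<in>{1..\<lfloor>2 * real n * ln (real n)\<rfloor>}. ln (max (- \<xi> x w) b / b))
                       / Ginv M (\<xi> 0) (1 / real n))
           at_top sequentially"
proof -
  interpret log_excess_iid M \<xi> b
    using assms
    by (intro log_excess_iid.intro infinite_log_moment.intro log_excess_iid_axioms.intro
        infinite_log_moment_axioms.intro) simp_all
  show ?thesis
    using AE_log_excess_sum_diverges
    by (simp only: log_excess_sum_def block_length_def log_excess_def)
qed

end
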